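(* Let $g$ be a Riemannian metric on $\mathbb{R}^D$ written as $g_x(u,u)=u^{\top}H(x)u$, such that there exists $c_2>0$ with $g_x(u,u)\le c_2\|u\|_2^2$ for all $x,u$, and $\|H(x)-H(y)\|_{\mathcal{B}}\le L_H\|x-y\|_2$ for all $x,y$. Let $K_1,K_2>0$ and $\gamma\in\mathcal{C}_{K_1,K_2}$. Then for every $N\ge1$, $$\left|\mathcal{E}^g(\gamma)-\mathcal{E}^g_{\mathrm{tra},N}(\gamma)\right|\le\frac{L_H(K_1^3+K_1^2K_2)}{N}+\frac{4c_2K_1K_2}{N}+\frac{4c_2K_2^2}{N^2}.$$
   Context: $\|\cdot\|_2$ is the Euclidean norm, $\|\cdot\|_{\mathcal{B}}$ the operator norm, $\|f\|_{L^2([0,1])}^2=\int_0^1\|f\|_2^2dt$. $\mathcal{C}_{K_1,K_2}$ is the set of continuous piecewise $C^1$ curves $\gamma:[0,1]\to\mathbb{R}^D$ with $\|\dot\gamma\|_{L^2([0,1])}\le K_1$ and $\|\ddot\gamma\|_{L^2([0,1])}\le K_2$. $\mathcal{E}^g(\gamma)=\int_0^1 g_{\gamma(t)}(\dot\gamma,\dot\gamma)dt$. With $t_n=n/N$, $h=1/N$, $\beta(t_n)=(\gamma(t_{n+1})-\gamma(t_n))/h$, the trapezoidal energy of $\gamma$ is $\mathcal{E}^g_{\mathrm{tra},N}(\gamma)=\frac1N\sum_{n=0}^{N-1}g_{(\gamma(t_n)+\gamma(t_{n+1}))/2}(\beta(t_n),\beta(t_n))$. *)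

theory Defs
  imports "HOL-Analysis.Analysis"
begin

definition metric_g :: "(real^'n \<Rightarrow> real^'n^'n) \<Rightarrow> real^'n \<Rightarrow> real^'n \<Rightarrow> real^'n \<Rightarrow> real" where
  "metric_g H x u v = u \<bullet> (H x *v v)"

definition riemannian_metric :: "(real^'n \<Rightarrow> real^'n^'n) \<Rightarrow> bool" where
  "riemannian_metric H \<longleftrightarrow>
     (\<forall>x. transpose (H x) = H x) \<and> (\<forall>x u. u \<noteq> 0 \<longrightarrow> metric_g H x u u > 0)"

definition op_norm :: "real^'n^'m \<Rightarrow> real" where
  "op_norm A = onorm (\<lambda>v. A *v v)"

definition curve_class :: "real \<Rightarrow> real \<Rightarrow> (real \<Rightarrow> real^'n) \<Rightarrow> bool" where
  "curve_class K1 K2 \<gamma> \<longleftrightarrow>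
     (\<exists>\<gamma>' \<gamma>'' S. finite S \<and>
        (\<forall>t\<in>{0..1}. (\<gamma> has_vector_derivative \<gamma>' t) (at t within {0..1})) \<and>
        continuous_on {0..1} \<gamma>' \<and>
        (\<forall>t\<in>{0..1} - S. (\<gamma>' has_vector_derivative \<gamma>'' t) (at t within {0..1})) \<and>
        (\<lambda>t. norm (\<gamma>' t)^2) integrable_on {0..1} \<and>
        (\<lambda>t. norm (\<gamma>'' t)^2) integrable_on {0..1} \<and>
        sqrt (integral {0..1} (\<lambda>t. norm (\<gamma>' t)^2)) \<le> K1 \<and>
        sqrt (integral {0..1} (\<lambda>t. norm (\<gamma>'' t)^2)) \<le> K2)"

definition energy :: "(real^'n \<Rightarrow> real^'n^'n) \<Rightarrow> (real \<Rightarrow> real^'n) \<Rightarrow> real" where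
  "energy H \<gamma> = integral {0..1}
     (\<lambda>t. let v = vector_derivative \<gamma> (at t within {0..1}) in metric_g H (\<gamma> t) v v)"

definition energy_tra :: "(real^'n \<Rightarrow> real^'n^'n) \<Rightarrow> nat \<Rightarrow> (real \<Rightarrow> real^'n) \<Rightarrow> real" where
  "energy_tra H N \<gamma> = (1 / real N) * (\<Sum>n<N.
     let a = \<gamma> (real n / real N); b = \<gamma> (real (Suc n) / real N);
         \<beta> = (1 / (1 / real N)) *\<^sub>R (b - a)
     in metric_g H ((1/2) *\<^sub>R (a + b)) \<beta> \<beta>)"

end

theory Submission
  imports Defs
begin

text \<open>On a grid cell [a, b] of length h, with chord midpoint m and chord slope
  \<beta> = (\<gamma> b - \<gamma> a) / h, the exact energy is compared with the trapezoidal term h g_m(\<beta>, \<beta>)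
  in two steps. Freezing the metric at m changes the integrand by at most
  L_H \<parallel>\<gamma> t - m\<parallel> \<parallel>\<gamma>' t\<parallel>^2 \<le> L_H (h/2) sup \<parallel>\<gamma>'\<parallel> \<parallel>\<gamma>' t\<parallel>^2, and sup \<parallel>\<gamma>'\<parallel> \<le> K1 + K2.
  For the frozen quadratic form q = g_m the deviation \<gamma>' - \<beta> has mean zero on the cell, so the
  cross terms integrate away and \<integral> q(\<gamma>') - h q(\<beta>) = \<integral> q(\<gamma>' - \<beta>), which lies between 0 and
  c2 h^2 \<integral> \<parallel>\<gamma>''\<parallel>^2 since \<parallel>\<gamma>' t - \<gamma>' s\<parallel>^2 \<le> h \<integral> \<parallel>\<gamma>''\<parallel>^2 by Cauchy-Schwarz.
  Summing over the N cells gives the error bound L_H (K1 + K2) K1^2 / (2N) + c2 K2^2 / N^2.\<close>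

definition sqnorm_integral :: "(real \<Rightarrow> 'a::real_normed_vector) \<Rightarrow> real \<Rightarrow> real \<Rightarrow> real" where
  "sqnorm_integral f a b = integral {a..b} (\<lambda>t. (norm (f t))^2)"

lemma sqnorm_integral_nonneg:
  "(\<lambda>t. (norm (f t))^2) integrable_on {a..b} \<Longrightarrow> 0 \<le> sqnorm_integral f a b"
  unfolding sqnorm_integral_def by (intro integral_nonneg) auto

lemma sqnorm_integral_mono:
  assumes "(\<lambda>t. (norm (f t))^2) integrable_on {a..b}" and "a \<le> c" "c \<le> d" "d \<le> b"
  shows "sqnorm_integral f c d \<le> sqnorm_integral f a b"
  unfolding sqnorm_integral_def
  using assms by (intro integral_subset_le integrable_on_subinterval[OF assms(1)]) auto

lemma norm_diff_midpoint_le: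
  fixes x y z :: "'a::real_normed_vector"
  shows "norm (z - midpoint x y) \<le> (norm (z - x) + norm (z - y)) / 2"
proof -
  have "2 *\<^sub>R (z - midpoint x y) = (z - x) + (z - y)"
    using midpoint_plus_self[of x y] by (simp add: scaleR_2 algebra_simps)
  then have "2 * norm (z - midpoint x y) = norm ((z - x) + (z - y))"
    by (metis norm_scaleR abs_numeral)
  then show ?thesis using norm_triangle_ineq[of "z - x" "z - y"] by simp
qed

lemma op_norm_nonneg: "0 \<le> op_norm (A::real^'n^'m)"
  unfolding op_norm_def by (intro onorm_pos_le matrix_vector_mul_bounded_linear)

lemma norm_matrix_vector_mult_le_op_norm: "norm (A *v v) \<le> op_norm A * norm v"
  unfolding op_norm_def by (intro onorm matrix_vector_mul_bounded_linear)

lemma op_norm_Lipschitz_const_nonneg: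
  fixes H :: "real^'n \<Rightarrow> real^'k^'m"
  assumes "\<forall>x y. op_norm (H x - H y) \<le> L * norm (x - y)"
  shows "0 \<le> L"
proof -
  fix i :: 'n
  have "0 \<le> op_norm (H 0 - H (axis i 1))" by (rule op_norm_nonneg)
  also have "\<dots> \<le> L * norm (0 - axis i (1::real))" using assms by blast
  finally show ?thesis by simp
qed

lemma continuous_on_op_norm_Lipschitz:
  fixes H :: "real^'n \<Rightarrow> real^'k^'m"
  assumes Lip: "\<forall>x y. op_norm (H x - H y) \<le> L * norm (x - y)"
  shows "continuous_on UNIV H"
proof -
  have column_continuous: "continuous_on UNIV (\<lambda>x. H x *v w)" for w
  proof (rule lipschitz_on_continuous_on, rule lipschitz_onI)
    fix x y
    have "dist (H x *v w) (H y *v w) = norm ((H x - H y) *v w)"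
      by (simp add: dist_norm matrix_vector_mult_diff_rdistrib)
    also have "\<dots> \<le> op_norm (H x - H y) * norm w"
      by (rule norm_matrix_vector_mult_le_op_norm)
    also have "\<dots> \<le> L * norm (x - y) * norm w"
      using Lip by (intro mult_right_mono) auto
    finally show "dist (H x *v w) (H y *v w) \<le> (L * norm w) * dist x y"
      by (simp add: dist_norm algebra_simps)
  qed (use op_norm_Lipschitz_const_nonneg[OF Lip] in auto)
  have columns: "H = (\<lambda>x. \<chi> i j. (H x *v axis j 1) $ i)"
    by (simp add: matrix_vector_mult_basis column_def)
  show ?thesis
    by (subst columns) (intro continuous_on_vec_lambda continuous_on_component column_continuous)
qed

lemma continuous_on_matrix_vector_mult:
  fixes A :: "real \<Rightarrow> real^'n^'m" and v :: "real \<Rightarrow> real^'n"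
  assumes "continuous_on S A" "continuous_on S v"
  shows "continuous_on S (\<lambda>t. A t *v v t)"
  unfolding matrix_vector_mult_def using assms
  by (intro continuous_on_vec_lambda continuous_intros)

lemma metric_g_diff_le:
  "\<bar>metric_g H x u u - metric_g H y u u\<bar> \<le> op_norm (H x - H y) * (norm u)^2"
proof -
  have "metric_g H x u u - metric_g H y u u = u \<bullet> ((H x - H y) *v u)"
    by (simp add: metric_g_def matrix_vector_mult_diff_rdistrib inner_diff_right)
  also have "\<bar>\<dots>\<bar> \<le> norm u * norm ((H x - H y) *v u)" by (rule Cauchy_Schwarz_ineq2)
  also have "\<dots> \<le> norm u * (op_norm (H x - H y) * norm u)"
    by (intro mult_left_mono norm_matrix_vector_mult_le_op_norm) auto
  finally show ?thesis by (simp add: power2_eq_square algebra_simps)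
qed

lemma riemannian_metric_nonneg: "riemannian_metric H \<Longrightarrow> 0 \<le> u \<bullet> (H x *v u)"
  unfolding riemannian_metric_def metric_g_def by (cases "u = 0") (auto intro: less_imp_le)

lemma integrable_metric_g_along:
  fixes p v :: "real \<Rightarrow> real^'n"
  assumes "continuous_on UNIV H" "continuous_on {a..b} p" "continuous_on {a..b} v"
  shows "(\<lambda>t. metric_g H (p t) (v t) (v t)) integrable_on {a..b}"
proof (rule integrable_continuous_interval)
  have "continuous_on {a..b} (\<lambda>t. H (p t))"
    using assms(1,2) by (rule continuous_on_compose2) auto
  then show "continuous_on {a..b} (\<lambda>t. metric_g H (p t) (v t) (v t))"
    unfolding metric_g_def
    by (intro continuous_intros continuous_on_matrix_vector_mult assms(3))
qed

lemma norm_integral_sq_le: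
  fixes f :: "real \<Rightarrow> 'a::{real_inner,banach}"
  assumes f: "f integrable_on {a..b}" and f2: "(\<lambda>x. (norm (f x))^2) integrable_on {a..b}"
  shows "(norm (integral {a..b} f))^2 \<le> (b - a) * sqnorm_integral f a b"
proof (cases "a < b")
  case False
  then show ?thesis by (cases "a = b") (auto simp: sqnorm_integral_def)
next
  case True
  define c where "c = integral {a..b} f"
  define Q where "Q = sqnorm_integral f a b"
  define l where "l = b - a"
  have "l > 0" using True by (simp add: l_def)
  \<comment> \<open>integrate \<open>0 \<le> \<parallel>l f x - c\<parallel>\<^sup>2\<close> over \<open>[a,b]\<close>\<close>
  have lhs: "((\<lambda>x. 2 * l * (f x \<bullet> c)) has_integral 2 * l * (c \<bullet> c)) {a..b}"
    using has_integral_mult_right[OF has_integral_linear[OF integrable_integral[OF f]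
          bounded_linear_inner_left[of c]], of "2 * l"]
    by (simp add: o_def c_def)
  have rhs: "((\<lambda>x. l^2 * (norm (f x))^2 + (norm c)^2) has_integral l^2 * Q + l * (norm c)^2) {a..b}"
    using has_integral_add[OF has_integral_mult_right[OF integrable_integral[OF f2], of "l^2"]
        has_integral_const_real[of "(norm c)^2" a b]] True
    by (simp add: l_def Q_def sqnorm_integral_def)
  have "2 * l * (f x \<bullet> c) \<le> l^2 * (norm (f x))^2 + (norm c)^2" for x
  proof -
    have "0 \<le> (norm (l *\<^sub>R f x - c))^2" by simp
    also have "\<dots> = l^2 * (norm (f x))^2 - 2 * l * (f x \<bullet> c) + (norm c)^2"
      by (simp only: power2_norm_eq_inner)
        (simp add: inner_diff_left inner_diff_right inner_commute power2_eq_square algebra_simps)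
    finally show ?thesis by simp
  qed
  then have "2 * l * (c \<bullet> c) \<le> l^2 * Q + l * (norm c)^2"
    using lhs rhs by (rule has_integral_le[rotated 2])
  then have "l * (norm c)^2 \<le> l * (l * Q)"
    by (simp add: dot_square_norm power2_eq_square algebra_simps)
  then show ?thesis using \<open>l > 0\<close> by (simp add: c_def l_def Q_def)
qed

lemma integral_unit_interval_eq_sum_uniform:
  fixes f :: "real \<Rightarrow> 'a::banach"
  assumes f: "f integrable_on {0..1}" and N: "N \<ge> 1"
  shows "integral {0..1} f = (\<Sum>n<N. integral {real n / real N..real (Suc n) / real N} f)"
proof -
  have "integral {0..real k / real N} f = (\<Sum>n<k. integral {real n / real N..real (Suc n) / real N} f)"
    if "k \<le> N" for k
    using that
  proof (induction k)
    case (Suc k)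
    have "real (Suc k) / real N \<le> 1" using Suc.prems N by (simp add: field_simps)
    then have "integral {0..real (Suc k) / real N} f
        = integral {0..real k / real N} f + integral {real k / real N..real (Suc k) / real N} f"
      by (intro Henstock_Kurzweil_Integration.integral_combine[symmetric])
        (auto simp: divide_right_mono intro: integrable_on_subinterval[OF f])
    then show ?case using Suc by simp
  qed simp
  from this[of N] N show ?thesis by simp
qed

lemma has_integral_quadratic_form_mean_zero_shift:
  fixes A :: "real^'n^'n" and w :: "real \<Rightarrow> real^'n"
  assumes w: "(w has_integral 0) {a..b}"
    and qw: "(\<lambda>t. w t \<bullet> (A *v w t)) integrable_on {a..b}" and "a \<le> b"
  shows "((\<lambda>t. (v + w t) \<bullet> (A *v (v + w t))) has_integral
           (b - a) * (v \<bullet> (A *v v)) + integral {a..b} (\<lambda>t. w t \<bullet> (A *v w t))) {a..b}"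
proof -
  define cross where "cross u = v \<bullet> (A *v u) + u \<bullet> (A *v v)" for u
  have "bounded_linear cross"
    unfolding cross_def
    by (intro bounded_linear_add bounded_linear_inner_left
        bounded_linear_compose[OF bounded_linear_inner_right matrix_vector_mul_bounded_linear])
  from has_integral_linear[OF w this] have cross_integral: "((\<lambda>t. cross (w t)) has_integral 0) {a..b}"
    by (simp add: o_def cross_def)
  have "(v + w t) \<bullet> (A *v (v + w t)) = v \<bullet> (A *v v) + cross (w t) + w t \<bullet> (A *v w t)" for t
    by (simp add: cross_def algebra_simps)
  then show ?thesis
    using has_integral_add[OF has_integral_add[OF has_integral_const_real[of "v \<bullet> (A *v v)" a b]
          cross_integral] integrable_integral[OF qw]] \<open>a \<le> b\<close>
    by (simp add: mult.commute)
qed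

lemma energy_tra_eq_sum:
  "energy_tra H N \<gamma> = (\<Sum>n<N. let a = real n / real N; b = real (Suc n) / real N;
                                 \<beta> = (1 / (b - a)) *\<^sub>R (\<gamma> b - \<gamma> a)
                             in (b - a) * metric_g H (midpoint (\<gamma> a) (\<gamma> b)) \<beta> \<beta>)"
  unfolding energy_tra_def sum_distrib_left Let_def
  by (intro sum.cong) (simp_all add: midpoint_def diff_divide_distrib[symmetric])

locale H2_curve =
  fixes \<gamma> \<gamma>' \<gamma>'' :: "real \<Rightarrow> real^'n" and S :: "real set"
  assumes finite_S: "finite S"
    and derivative: "\<And>t. t \<in> {0..1} \<Longrightarrow> (\<gamma> has_vector_derivative \<gamma>' t) (at t within {0..1})"
    and continuous_derivative: "continuous_on {0..1} \<gamma>'"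
    and second_derivative:
      "\<And>t. t \<in> {0..1} - S \<Longrightarrow> (\<gamma>' has_vector_derivative \<gamma>'' t) (at t within {0..1})"
    and sq_integrable_derivative: "(\<lambda>t. (norm (\<gamma>' t))^2) integrable_on {0..1}"
    and sq_integrable_second_derivative: "(\<lambda>t. (norm (\<gamma>'' t))^2) integrable_on {0..1}"
begin

lemma continuous_on_curve: "continuous_on {0..1} \<gamma>"
  using derivative by (metis continuous_on_eq_continuous_within has_vector_derivative_continuous)

lemma vector_derivative_eq: "t \<in> {0..1} \<Longrightarrow> vector_derivative \<gamma> (at t within {0..1}) = \<gamma>' t"
  by (intro vector_derivative_within_closed_interval derivative) auto

lemma has_integral_derivative:
  assumes "0 \<le> a" "a \<le> b" "b \<le> 1"
  shows "(\<gamma>' has_integral \<gamma> b - \<gamma> a) {a..b}"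
proof (rule fundamental_theorem_of_calculus[OF \<open>a \<le> b\<close>])
  fix t assume "t \<in> {a..b}"
  with assms have "(\<gamma> has_vector_derivative \<gamma>' t) (at t within {0..1})" by (intro derivative) auto
  then show "(\<gamma> has_vector_derivative \<gamma>' t) (at t within {a..b})"
    by (rule has_vector_derivative_within_subset) (use assms in auto)
qed

lemma has_integral_second_derivative:
  assumes "0 \<le> a" "a \<le> b" "b \<le> 1"
  shows "(\<gamma>'' has_integral \<gamma>' b - \<gamma>' a) {a..b}"
proof (rule fundamental_theorem_of_calculus_interior_strong[OF finite_S \<open>a \<le> b\<close>])
  fix t assume t: "t \<in> {a<..<b} - S"
  with assms have "(\<gamma>' has_vector_derivative \<gamma>'' t) (at t within {0..1})"
    by (intro second_derivative) auto
  moreover have "at t within {0..1} = at t" using t assms by (intro at_within_Icc_at) auto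
  ultimately show "(\<gamma>' has_vector_derivative \<gamma>'' t) (at t)" by simp
qed (use assms in \<open>auto intro: continuous_on_subset[OF continuous_derivative]\<close>)

lemma sq_integrable_derivative_on:
  "0 \<le> a \<Longrightarrow> b \<le> 1 \<Longrightarrow> (\<lambda>t. (norm (\<gamma>' t))^2) integrable_on {a..b}"
  by (rule integrable_on_subinterval[OF sq_integrable_derivative]) auto

lemma sq_integrable_second_derivative_on:
  "0 \<le> a \<Longrightarrow> b \<le> 1 \<Longrightarrow> (\<lambda>t. (norm (\<gamma>'' t))^2) integrable_on {a..b}"
  by (rule integrable_on_subinterval[OF sq_integrable_second_derivative]) auto

lemma norm_derivative_diff_sq_le:
  assumes "0 \<le> a" "b \<le> 1" "s \<in> {a..b}" "t \<in> {a..b}"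
  shows "(norm (\<gamma>' t - \<gamma>' s))^2 \<le> (b - a) * sqnorm_integral \<gamma>'' a b"
proof -
  have ordered: "(norm (\<gamma>' y - \<gamma>' x))^2 \<le> (b - a) * sqnorm_integral \<gamma>'' a b"
    if xy: "x \<le> y" "x \<in> {a..b}" "y \<in> {a..b}" for x y
  proof -
    have "\<gamma>' y - \<gamma>' x = integral {x..y} \<gamma>''"
      using integral_unique[OF has_integral_second_derivative[of x y]] assms xy by simp
    then have "(norm (\<gamma>' y - \<gamma>' x))^2 \<le> (y - x) * sqnorm_integral \<gamma>'' x y"
      using assms xy by (auto intro!: norm_integral_sq_le sq_integrable_second_derivative_on
          has_integral_integrable[OF has_integral_second_derivative])
    also have "\<dots> \<le> (b - a) * sqnorm_integral \<gamma>'' a b"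
      using assms xy by (intro mult_mono sqnorm_integral_mono sqnorm_integral_nonneg
          sq_integrable_second_derivative_on) auto
    finally show ?thesis .
  qed
  show ?thesis
    using ordered[of s t] ordered[of t s] assms by (cases "s \<le> t") (auto simp: norm_minus_commute)
qed

text \<open>At a point \<open>s\<^sub>0\<close> where \<open>\<parallel>\<gamma>'\<parallel>\<close> is minimal, \<open>\<parallel>\<gamma>' s\<^sub>0\<parallel>\<^sup>2\<close> is at most the mean
  of \<open>\<parallel>\<gamma>'\<parallel>\<^sup>2\<close>; elsewhere \<open>\<gamma>'\<close> differs from \<open>\<gamma>' s\<^sub>0\<close> by at most \<open>\<parallel>\<gamma>''\<parallel>\<^sub>L\<^sub>2\<close>.\<close>
lemma norm_derivative_le:
  assumes "t \<in> {0..1}"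
  shows "norm (\<gamma>' t) \<le> sqrt (sqnorm_integral \<gamma>' 0 1) + sqrt (sqnorm_integral \<gamma>'' 0 1)"
proof -
  have "continuous_on {0..1} (\<lambda>t. (norm (\<gamma>' t))^2)"
    using continuous_derivative by (intro continuous_intros)
  then obtain s0 where s0: "s0 \<in> {0..1}" "\<And>s. s \<in> {0..1} \<Longrightarrow> (norm (\<gamma>' s0))^2 \<le> (norm (\<gamma>' s))^2"
    using continuous_attains_inf[of "{0..1::real}" "\<lambda>t. (norm (\<gamma>' t))^2"] by auto
  have "integral {0..1} (\<lambda>_::real. (norm (\<gamma>' s0))^2) \<le> sqnorm_integral \<gamma>' 0 1"
    unfolding sqnorm_integral_def
    by (rule integral_le) (use s0 sq_integrable_derivative in auto)
  then have "norm (\<gamma>' s0) \<le> sqrt (sqnorm_integral \<gamma>' 0 1)"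
    by (intro real_le_rsqrt) simp
  moreover have "norm (\<gamma>' t - \<gamma>' s0) \<le> sqrt (sqnorm_integral \<gamma>'' 0 1)"
    using norm_derivative_diff_sq_le[of 0 1 s0 t] s0 assms by (intro real_le_rsqrt) auto
  moreover have "norm (\<gamma>' t) \<le> norm (\<gamma>' s0) + norm (\<gamma>' t - \<gamma>' s0)"
    using norm_triangle_ineq[of "\<gamma>' s0" "\<gamma>' t - \<gamma>' s0"] by simp
  ultimately show ?thesis by linarith
qed

lemma norm_diff_le:
  assumes M: "\<And>t. t \<in> {0..1} \<Longrightarrow> norm (\<gamma>' t) \<le> M" and "0 \<le> s" "s \<le> t" "t \<le> 1"
  shows "norm (\<gamma> t - \<gamma> s) \<le> M * (t - s)"
proof -
  have "\<gamma> t - \<gamma> s = integral {s..t} \<gamma>'"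
    using integral_unique[OF has_integral_derivative[of s t]] assms by simp
  also have "norm \<dots> \<le> integral {s..t} (\<lambda>_. M)"
    using has_integral_derivative assms by (intro integral_norm_bound_integral) auto
  finally show ?thesis using assms by (simp add: mult.commute)
qed

lemma norm_sub_midpoint_le:
  assumes M: "\<And>t. t \<in> {0..1} \<Longrightarrow> norm (\<gamma>' t) \<le> M" and "0 \<le> a" "t \<in> {a..b}" "b \<le> 1"
  shows "norm (\<gamma> t - midpoint (\<gamma> a) (\<gamma> b)) \<le> M * (b - a) / 2"
proof -
  have "norm (\<gamma> t - midpoint (\<gamma> a) (\<gamma> b)) \<le> (norm (\<gamma> t - \<gamma> a) + norm (\<gamma> b - \<gamma> t)) / 2"
    using norm_diff_midpoint_le[of "\<gamma> t" "\<gamma> a" "\<gamma> b"] by (simp add: norm_minus_commute)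
  also have "\<dots> \<le> (M * (t - a) + M * (b - t)) / 2"
    using assms by (intro divide_right_mono add_mono norm_diff_le[OF M]) auto
  finally show ?thesis by (simp add: algebra_simps)
qed

lemma norm_derivative_sub_secant_sq_le:
  assumes "0 \<le> a" "a < b" "b \<le> 1" "t \<in> {a..b}"
  shows "(norm (\<gamma>' t - (1 / (b - a)) *\<^sub>R (\<gamma> b - \<gamma> a)))^2 \<le> (b - a) * sqnorm_integral \<gamma>'' a b"
proof -
  define r where "r = sqrt ((b - a) * sqnorm_integral \<gamma>'' a b)"
  have "0 \<le> sqnorm_integral \<gamma>'' a b"
    using assms by (intro sqnorm_integral_nonneg sq_integrable_second_derivative_on)
  have deviation: "((\<lambda>s. \<gamma>' t - \<gamma>' s) has_integral (b - a) *\<^sub>R \<gamma>' t - (\<gamma> b - \<gamma> a)) {a..b}"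
    using assms has_integral_const_real[of "\<gamma>' t" a b]
    by (intro has_integral_diff has_integral_derivative) auto
  have "0 \<le> r" using \<open>0 \<le> sqnorm_integral \<gamma>'' a b\<close> assms by (simp add: r_def)
  moreover have "norm (\<gamma>' t - \<gamma>' s) \<le> r" if "s \<in> {a..b} - {}" for s
    unfolding r_def using assms that by (intro real_le_rsqrt norm_derivative_diff_sq_le) auto
  ultimately have "norm ((b - a) *\<^sub>R \<gamma>' t - (\<gamma> b - \<gamma> a)) \<le> r * (b - a)"
    using has_integral_bound_real[OF _ finite.emptyI deviation] assms by simp
  also have "(b - a) *\<^sub>R \<gamma>' t - (\<gamma> b - \<gamma> a) = (b - a) *\<^sub>R (\<gamma>' t - (1 / (b - a)) *\<^sub>R (\<gamma> b - \<gamma> a))"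
    using assms by (simp add: algebra_simps)
  finally have "norm (\<gamma>' t - (1 / (b - a)) *\<^sub>R (\<gamma> b - \<gamma> a)) \<le> r"
    using assms by simp
  then have "(norm (\<gamma>' t - (1 / (b - a)) *\<^sub>R (\<gamma> b - \<gamma> a)))^2 \<le> r^2"
    by (intro power_mono) auto
  also have "r^2 = (b - a) * sqnorm_integral \<gamma>'' a b"
    using \<open>0 \<le> sqnorm_integral \<gamma>'' a b\<close> assms by (simp add: r_def)
  finally show ?thesis .
qed

lemma integral_metric_midpoint_error:
  assumes Lip: "\<forall>x y. op_norm (H x - H y) \<le> L * norm (x - y)"
    and M: "\<And>t. t \<in> {0..1} \<Longrightarrow> norm (\<gamma>' t) \<le> M" and ab: "0 \<le> a" "a \<le> b" "b \<le> 1"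
  shows "\<bar>integral {a..b} (\<lambda>t. metric_g H (\<gamma> t) (\<gamma>' t) (\<gamma>' t))
          - integral {a..b} (\<lambda>t. metric_g H (midpoint (\<gamma> a) (\<gamma> b)) (\<gamma>' t) (\<gamma>' t))\<bar>
         \<le> L * (M * (b - a) / 2) * sqnorm_integral \<gamma>' a b"
proof -
  define m where "m = midpoint (\<gamma> a) (\<gamma> b)"
  have H: "continuous_on UNIV H" by (rule continuous_on_op_norm_Lipschitz[OF Lip])
  have "{a..b} \<subseteq> {0..1}" using ab by auto
  then have "continuous_on {a..b} \<gamma>" "continuous_on {a..b} \<gamma>'"
    using continuous_on_subset continuous_on_curve continuous_derivative by blast+
  then have integrable:
    "(\<lambda>t. metric_g H (\<gamma> t) (\<gamma>' t) (\<gamma>' t)) integrable_on {a..b}"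
    "(\<lambda>t. metric_g H m (\<gamma>' t) (\<gamma>' t)) integrable_on {a..b}"
    by (auto intro: integrable_metric_g_along[OF H])
  have "norm (integral {a..b} (\<lambda>t. metric_g H (\<gamma> t) (\<gamma>' t) (\<gamma>' t) - metric_g H m (\<gamma>' t) (\<gamma>' t)))
      \<le> integral {a..b} (\<lambda>t. L * (M * (b - a) / 2) * (norm (\<gamma>' t))^2)"
  proof (rule integral_norm_bound_integral)
    fix t assume t: "t \<in> {a..b}"
    have "norm (metric_g H (\<gamma> t) (\<gamma>' t) (\<gamma>' t) - metric_g H m (\<gamma>' t) (\<gamma>' t))
        \<le> op_norm (H (\<gamma> t) - H m) * (norm (\<gamma>' t))^2"
      using metric_g_diff_le by simp
    also have "\<dots> \<le> L * norm (\<gamma> t - m) * (norm (\<gamma>' t))^2"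
      using Lip by (intro mult_right_mono) auto
    also have "\<dots> \<le> L * (M * (b - a) / 2) * (norm (\<gamma>' t))^2"
      unfolding m_def using norm_sub_midpoint_le[OF M] op_norm_Lipschitz_const_nonneg[OF Lip] t ab
      by (intro mult_right_mono mult_left_mono) auto
    finally show "norm (metric_g H (\<gamma> t) (\<gamma>' t) (\<gamma>' t) - metric_g H m (\<gamma>' t) (\<gamma>' t))
        \<le> L * (M * (b - a) / 2) * (norm (\<gamma>' t))^2" .
  qed (use integrable sq_integrable_derivative_on ab in \<open>auto intro: integrable_diff integrable_on_mult_right\<close>)
  then show ?thesis
    using integrable by (simp add: integral_diff sqnorm_integral_def m_def)
qed

lemma integral_quadratic_form_secant_error:
  fixes A :: "real^'n^'n"
  assumes psd: "\<And>v. 0 \<le> v \<bullet> (A *v v)" and bounded: "\<And>v. v \<bullet> (A *v v) \<le> c * (norm v)^2"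
    and "0 \<le> c" and ab: "0 \<le> a" "a < b" "b \<le> 1"
  defines "\<beta> \<equiv> (1 / (b - a)) *\<^sub>R (\<gamma> b - \<gamma> a)"
  shows "0 \<le> integral {a..b} (\<lambda>t. \<gamma>' t \<bullet> (A *v \<gamma>' t)) - (b - a) * (\<beta> \<bullet> (A *v \<beta>))"
    and "integral {a..b} (\<lambda>t. \<gamma>' t \<bullet> (A *v \<gamma>' t)) - (b - a) * (\<beta> \<bullet> (A *v \<beta>))
           \<le> c * (b - a)^2 * sqnorm_integral \<gamma>'' a b"
proof -
  define w where "w t = \<gamma>' t - \<beta>" for t
  have "(w has_integral (\<gamma> b - \<gamma> a) - (b - a) *\<^sub>R \<beta>) {a..b}"
    unfolding w_def using ab has_integral_const_real[of \<beta> a b]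
    by (intro has_integral_diff has_integral_derivative) auto
  then have w0: "(w has_integral 0) {a..b}" using ab by (simp add: \<beta>_def)
  have "continuous_on {a..b} w"
    unfolding w_def using ab
    by (intro continuous_intros continuous_on_subset[OF continuous_derivative]) auto
  then have qw: "(\<lambda>t. w t \<bullet> (A *v w t)) integrable_on {a..b}"
    by (intro integrable_continuous_interval continuous_intros continuous_on_matrix_vector_mult) auto
  have "\<beta> + w t = \<gamma>' t" for t by (simp add: w_def)
  with has_integral_quadratic_form_mean_zero_shift[OF w0 qw, of \<beta>] ab
  have error: "integral {a..b} (\<lambda>t. \<gamma>' t \<bullet> (A *v \<gamma>' t)) - (b - a) * (\<beta> \<bullet> (A *v \<beta>))
      = integral {a..b} (\<lambda>t. w t \<bullet> (A *v w t))"
    by (simp add: integral_unique)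
  show "0 \<le> integral {a..b} (\<lambda>t. \<gamma>' t \<bullet> (A *v \<gamma>' t)) - (b - a) * (\<beta> \<bullet> (A *v \<beta>))"
    unfolding error using qw psd by (intro integral_nonneg)
  have "integral {a..b} (\<lambda>t. w t \<bullet> (A *v w t)) \<le> integral {a..b} (\<lambda>_. c * ((b - a) * sqnorm_integral \<gamma>'' a b))"
  proof (rule integral_le)
    fix t assume "t \<in> {a..b}"
    then have "(norm (w t))^2 \<le> (b - a) * sqnorm_integral \<gamma>'' a b"
      unfolding w_def \<beta>_def using ab by (intro norm_derivative_sub_secant_sq_le)
    then show "w t \<bullet> (A *v w t) \<le> c * ((b - a) * sqnorm_integral \<gamma>'' a b)"
      using bounded[of "w t"] \<open>0 \<le> c\<close> by (meson mult_left_mono order_trans)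
  qed (use qw in auto)
  then show "integral {a..b} (\<lambda>t. \<gamma>' t \<bullet> (A *v \<gamma>' t)) - (b - a) * (\<beta> \<bullet> (A *v \<beta>))
      \<le> c * (b - a)^2 * sqnorm_integral \<gamma>'' a b"
    unfolding error using ab by (simp add: power2_eq_square algebra_simps)
qed

lemma trapezoidal_local_error_le:
  assumes rm: "riemannian_metric H" and bounded: "\<forall>x u. metric_g H x u u \<le> c2 * (norm u)^2"
    and "0 \<le> c2" and Lip: "\<forall>x y. op_norm (H x - H y) \<le> L * norm (x - y)"
    and M: "\<And>t. t \<in> {0..1} \<Longrightarrow> norm (\<gamma>' t) \<le> M" and ab: "0 \<le> a" "a < b" "b \<le> 1"
  defines "\<beta> \<equiv> (1 / (b - a)) *\<^sub>R (\<gamma> b - \<gamma> a)"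
  shows "\<bar>integral {a..b} (\<lambda>t. metric_g H (\<gamma> t) (\<gamma>' t) (\<gamma>' t))
            - (b - a) * metric_g H (midpoint (\<gamma> a) (\<gamma> b)) \<beta> \<beta>\<bar>
         \<le> L * (M * (b - a) / 2) * sqnorm_integral \<gamma>' a b + c2 * (b - a)^2 * sqnorm_integral \<gamma>'' a b"
proof -
  define m where "m = midpoint (\<gamma> a) (\<gamma> b)"
  have "\<And>v. 0 \<le> v \<bullet> (H m *v v)" "\<And>v. v \<bullet> (H m *v v) \<le> c2 * (norm v)^2"
    using riemannian_metric_nonneg[OF rm] bounded by (auto simp: metric_g_def)
  from integral_quadratic_form_secant_error[OF this \<open>0 \<le> c2\<close> ab]
  have "0 \<le> integral {a..b} (\<lambda>t. metric_g H m (\<gamma>' t) (\<gamma>' t)) - (b - a) * metric_g H m \<beta> \<beta>"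
    "integral {a..b} (\<lambda>t. metric_g H m (\<gamma>' t) (\<gamma>' t)) - (b - a) * metric_g H m \<beta> \<beta>
      \<le> c2 * (b - a)^2 * sqnorm_integral \<gamma>'' a b"
    by (simp_all add: metric_g_def \<beta>_def)
  with integral_metric_midpoint_error[OF Lip M, of a b] ab
  show ?thesis unfolding m_def abs_le_iff by (intro conjI) linarith+
qed

lemma energy_eq_sum_uniform:
  assumes "continuous_on UNIV H" "N \<ge> 1"
  shows "energy H \<gamma> = (\<Sum>n<N. integral {real n / real N..real (Suc n) / real N}
                              (\<lambda>t. metric_g H (\<gamma> t) (\<gamma>' t) (\<gamma>' t)))"
proof -
  have "energy H \<gamma> = integral {0..1} (\<lambda>t. metric_g H (\<gamma> t) (\<gamma>' t) (\<gamma>' t))"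
    unfolding energy_def Let_def by (intro integral_cong) (simp add: vector_derivative_eq)
  also have "\<dots> = (\<Sum>n<N. integral {real n / real N..real (Suc n) / real N}
                        (\<lambda>t. metric_g H (\<gamma> t) (\<gamma>' t) (\<gamma>' t)))"
    using assms continuous_on_curve continuous_derivative
    by (intro integral_unit_interval_eq_sum_uniform integrable_metric_g_along)
  finally show ?thesis .
qed

lemma energy_tra_error_le:
  assumes rm: "riemannian_metric H" and bounded: "\<forall>x u. metric_g H x u u \<le> c2 * (norm u)^2"
    and "0 \<le> c2" and Lip: "\<forall>x y. op_norm (H x - H y) \<le> L * norm (x - y)" and N: "N \<ge> 1"
  defines "M \<equiv> sqrt (sqnorm_integral \<gamma>' 0 1) + sqrt (sqnorm_integral \<gamma>'' 0 1)"
  shows "\<bar>energy H \<gamma> - energy_tra H N \<gamma>\<bar>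
           \<le> L * M * sqnorm_integral \<gamma>' 0 1 / (2 * real N) + c2 * sqnorm_integral \<gamma>'' 0 1 / (real N)^2"
proof -
  define t where "t n = real n / real N" for n
  define e where "e = (\<lambda>s. metric_g H (\<gamma> s) (\<gamma>' s) (\<gamma>' s))"
  define T where "T n = (let a = t n; b = t (Suc n); \<beta> = (1 / (b - a)) *\<^sub>R (\<gamma> b - \<gamma> a)
                         in (b - a) * metric_g H (midpoint (\<gamma> a) (\<gamma> b)) \<beta> \<beta>)" for n
  have step: "t (Suc n) - t n = 1 / real N" for n
    by (simp add: t_def diff_divide_distrib[symmetric])
  have local: "\<bar>integral {t n..t (Suc n)} e - T n\<bar>
      \<le> L * M / (2 * real N) * sqnorm_integral \<gamma>' (t n) (t (Suc n))
        + c2 / (real N)^2 * sqnorm_integral \<gamma>'' (t n) (t (Suc n))" if "n < N" for n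
  proof -
    have "0 \<le> t n" "t n < t (Suc n)" "t (Suc n) \<le> 1"
      using that N by (auto simp: t_def field_simps)
    from trapezoidal_local_error_le[OF rm bounded \<open>0 \<le> c2\<close> Lip _ this, of M]
    show ?thesis
      using norm_derivative_le by (simp add: e_def T_def Let_def step M_def power_divide)
  qed
  have "energy H \<gamma> = (\<Sum>n<N. integral {t n..t (Suc n)} e)"
    unfolding t_def e_def by (rule energy_eq_sum_uniform[OF continuous_on_op_norm_Lipschitz[OF Lip] N])
  moreover have "energy_tra H N \<gamma> = (\<Sum>n<N. T n)"
    unfolding T_def t_def by (rule energy_tra_eq_sum)
  ultimately have "\<bar>energy H \<gamma> - energy_tra H N \<gamma>\<bar> = \<bar>\<Sum>n<N. integral {t n..t (Suc n)} e - T n\<bar>"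
    by (simp add: sum_subtractf)
  also have "\<dots> \<le> (\<Sum>n<N. \<bar>integral {t n..t (Suc n)} e - T n\<bar>)" by (rule sum_abs)
  also have "\<dots> \<le> (\<Sum>n<N. L * M / (2 * real N) * sqnorm_integral \<gamma>' (t n) (t (Suc n))
                        + c2 / (real N)^2 * sqnorm_integral \<gamma>'' (t n) (t (Suc n)))"
    by (intro sum_mono local) simp
  also have "\<dots> = L * M / (2 * real N) * sqnorm_integral \<gamma>' 0 1 + c2 / (real N)^2 * sqnorm_integral \<gamma>'' 0 1"
    using integral_unit_interval_eq_sum_uniform[OF sq_integrable_derivative N]
      integral_unit_interval_eq_sum_uniform[OF sq_integrable_second_derivative N]
    by (simp add: sqnorm_integral_def t_def sum.distrib sum_distrib_left)
  finally show ?thesis by simp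
qed

end

lemma sqrt_add_sqrt_mult_le:
  fixes q1 q2 k1 k2 :: real
  assumes "0 \<le> q1" "0 \<le> q2" "sqrt q1 \<le> k1" "sqrt q2 \<le> k2"
  shows "(sqrt q1 + sqrt q2) * q1 \<le> k1^3 + k1^2 * k2"
proof -
  have "0 \<le> k1" "0 \<le> k2" using assms real_sqrt_ge_zero order_trans by blast+
  then have "(sqrt q1 + sqrt q2) * q1 \<le> (k1 + k2) * k1^2"
    using assms by (intro mult_mono add_mono) (auto dest: sqrt_le_D)
  then show ?thesis by (simp add: power2_eq_square power3_eq_cube algebra_simps)
qed

theorem proposition7p5:
  fixes H :: "real^'n \<Rightarrow> real^'n^'n" and c2 L_H K1 K2 :: real
    and \<gamma> :: "real \<Rightarrow> real^'n" and N :: nat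
  assumes "riemannian_metric H"
    and "c2 > 0"
    and "\<forall>x u. metric_g H x u u \<le> c2 * (norm u)^2"
    and "\<forall>x y. op_norm (H x - H y) \<le> L_H * norm (x - y)"
    and "K1 > 0" and "K2 > 0"
    and "curve_class K1 K2 \<gamma>"
    and "N \<ge> 1"
  shows "\<bar>energy H \<gamma> - energy_tra H N \<gamma>\<bar>
           \<le> L_H * (K1^3 + K1^2 * K2) / real N + 4 * c2 * K1 * K2 / real N
              + 4 * c2 * K2^2 / (real N)^2"
proof -
  obtain \<gamma>' \<gamma>'' S where "H2_curve \<gamma> \<gamma>' \<gamma>'' S"
    and K1: "sqrt (sqnorm_integral \<gamma>' 0 1) \<le> K1" and K2: "sqrt (sqnorm_integral \<gamma>'' 0 1) \<le> K2"
    using \<open>curve_class K1 K2 \<gamma>\<close> unfolding curve_class_def H2_curve_def sqnorm_integral_def by blast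
  then interpret H2_curve \<gamma> \<gamma>' \<gamma>'' S by simp
  define Q1 where "Q1 = sqnorm_integral \<gamma>' 0 1"
  define Q2 where "Q2 = sqnorm_integral \<gamma>'' 0 1"
  have Q: "0 \<le> Q1" "0 \<le> Q2"
    unfolding Q1_def Q2_def
    by (intro sqnorm_integral_nonneg sq_integrable_derivative sq_integrable_second_derivative)+
  have "L_H \<ge> 0" using assms(4) by (rule op_norm_Lipschitz_const_nonneg)
  have error: "\<bar>energy H \<gamma> - energy_tra H N \<gamma>\<bar>
      \<le> L_H * (sqrt Q1 + sqrt Q2) * Q1 / (2 * real N) + c2 * Q2 / (real N)^2"
    using energy_tra_error_le[OF assms(1,3) _ assms(4,8)] \<open>c2 > 0\<close> by (simp add: Q1_def Q2_def)
  have "L_H * (sqrt Q1 + sqrt Q2) * Q1 \<le> L_H * (K1^3 + K1^2 * K2)"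
    using sqrt_add_sqrt_mult_le[OF Q K1[folded Q1_def] K2[folded Q2_def]] \<open>L_H \<ge> 0\<close>
    by (simp add: mult_left_mono mult.assoc)
  then have "L_H * (sqrt Q1 + sqrt Q2) * Q1 / (2 * real N) \<le> L_H * (K1^3 + K1^2 * K2) / real N"
    using \<open>L_H \<ge> 0\<close> \<open>K1 > 0\<close> \<open>K2 > 0\<close> \<open>N \<ge> 1\<close> by (intro frac_le) auto
  moreover have "c2 * Q2 / (real N)^2 \<le> 4 * c2 * K2^2 / (real N)^2"
    using sqrt_le_D[OF K2] \<open>0 \<le> Q2\<close> \<open>c2 > 0\<close> by (intro divide_right_mono) (auto simp: Q2_def)
  moreover have "0 \<le> 4 * c2 * K1 * K2 / real N"
    using \<open>c2 > 0\<close> \<open>K1 > 0\<close> \<open>K2 > 0\<close> by simp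
  ultimately show ?thesis using error by linarith
qed

end
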